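(* Let $X=\{x_1,\ldots,x_n\}$ be a finite set and $k\ge 2$. For every set of medoids $M\subseteq X$ with $|M|=k$, there exists a dissimilarity $d$ on $X$ such that $M=\operatorname{arg\,max}_{M'}\tilde{S}(X,d,M')$, where $M'$ ranges over all subsets of $X$ of size $k$; that is, $M$ is the unique maximizer of the Average Medoid Silhouette (richness).
   Context: For a dissimilarity $d: X\times X\to\mathbb{R}$ and a set of medoids $M\subseteq X$, let $d_1(i)$ denote the distance from $x_i$ to its closest medoid in $M$ and $d_2(i)$ the distance to its second closest medoid in $M$. The Medoid Silhouette of $x_i$ is $\tilde{s}_i(X,d,M)=1-\frac{d_1(i)}{d_2(i)}$, with the convention $\tilde{s}_i=1$ when $d_1(i)=d_2(i)=0$; the Average Medoid Silhouette is $\tilde{S}(X,d,M)=\frac{1}{n}\sum_{i=1}^n\tilde{s}_i(X,d,M)$. *)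

theory Defs
  imports Main Complex_Main
begin

definition dissimilarity :: "'a set \<Rightarrow> ('a \<Rightarrow> 'a \<Rightarrow> real) \<Rightarrow> bool" where
  "dissimilarity X d \<longleftrightarrow>
     (\<forall>x\<in>X. \<forall>y\<in>X. d x y \<ge> 0 \<and> d x y = d y x) \<and> (\<forall>x\<in>X. d x x = 0)"

definition dist1 :: "('a \<Rightarrow> 'a \<Rightarrow> real) \<Rightarrow> 'a set \<Rightarrow> 'a \<Rightarrow> real" where
  "dist1 d M x = Min ((\<lambda>m. d x m) ` M)"

text \<open>Distance to the second closest medoid (second smallest value of the
  multiset of distances to the medoids, i.e. the minimum over pairs of distinct
  medoids of the larger of the two distances).\<close>
definition dist2 :: "('a \<Rightarrow> 'a \<Rightarrow> real) \<Rightarrow> 'a set \<Rightarrow> 'a \<Rightarrow> real" where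
  "dist2 d M x = Min {max (d x a) (d x b) | a b. a \<in> M \<and> b \<in> M \<and> a \<noteq> b}"

definition medoid_silhouette :: "('a \<Rightarrow> 'a \<Rightarrow> real) \<Rightarrow> 'a set \<Rightarrow> 'a \<Rightarrow> real" where
  "medoid_silhouette d M x =
     (if dist1 d M x = 0 \<and> dist2 d M x = 0 then 1
      else 1 - dist1 d M x / dist2 d M x)"

definition avg_medoid_silhouette :: "'a set \<Rightarrow> ('a \<Rightarrow> 'a \<Rightarrow> real) \<Rightarrow> 'a set \<Rightarrow> real" where
  "avg_medoid_silhouette X d M = (\<Sum>x\<in>X. medoid_silhouette d M x) / real (card X)"

end

theory Submission
  imports Defs
begin

text \<open>Choose a medoid \<open>c\<close> of \<open>M\<close> as a hub: \<open>c\<close> is at distance 1 from every non-medoid and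
  at distance 2 from every other medoid, while all other pairs of distinct points are at
  distance 3. As all these distances lie in \<open>[1, 3]\<close>, for any \<open>k\<close>-set \<open>S\<close> a point outside \<open>S\<close>
  has medoid silhouette at most \<open>1 - 1/3 = 2/3\<close> and a point of \<open>S\<close> has silhouette 1, and \<open>M\<close>
  attains all of these bounds. If \<open>S \<noteq> M\<close>, some medoid \<open>m\<close> is missing from \<open>S\<close>: if \<open>m = c\<close>
  all its distances to \<open>S\<close> are at most 2, otherwise they are all at least 2, and either way
  its silhouette drops strictly below \<open>2/3\<close>.\<close>

lemma dist1_le: "finite S \<Longrightarrow> y \<in> S \<Longrightarrow> dist1 d S x \<le> d x y"
  unfolding dist1_def by (rule Min_le) auto

lemma dist1_ge: "finite S \<Longrightarrow> S \<noteq> {} \<Longrightarrow> (\<And>y. y \<in> S \<Longrightarrow> c \<le> d x y) \<Longrightarrow> c \<le> dist1 d S x"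
  unfolding dist1_def by (subst Min_ge_iff) auto

lemma finite_dist2_values:
  assumes "finite S"
  shows "finite {max (d x a) (d x b) | a b. a \<in> S \<and> b \<in> S \<and> a \<noteq> b}"
proof (rule finite_subset)
  show "{max (d x a) (d x b) | a b. a \<in> S \<and> b \<in> S \<and> a \<noteq> b}
          \<subseteq> (\<lambda>(a, b). max (d x a) (d x b)) ` (S \<times> S)"
    by auto
qed (use assms in blast)

lemma dist2_le:
  assumes "finite S" "a \<in> S" "b \<in> S" "a \<noteq> b" "d x a \<le> c" "d x b \<le> c"
  shows "dist2 d S x \<le> c"
proof -
  have "dist2 d S x \<le> max (d x a) (d x b)"
    unfolding dist2_def using assms(2-4) by (intro Min_le finite_dist2_values[OF assms(1)]) blast
  then show ?thesis
    using assms(5,6) by simp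
qed

lemma dist2_ge:
  assumes "finite S" "a \<in> S" "b \<in> S" "a \<noteq> b"
    and "\<And>a b. a \<in> S \<Longrightarrow> b \<in> S \<Longrightarrow> a \<noteq> b \<Longrightarrow> c \<le> max (d x a) (d x b)"
  shows "c \<le> dist2 d S x"
  unfolding dist2_def
proof (rule Min.boundedI)
  show "finite {max (d x a) (d x b) | a b. a \<in> S \<and> b \<in> S \<and> a \<noteq> b}"
    using finite_dist2_values[OF assms(1)] .
  show "{max (d x a) (d x b) | a b. a \<in> S \<and> b \<in> S \<and> a \<noteq> b} \<noteq> {}"
    using assms(2-4) by blast
qed (use assms(5) in blast)

lemma two_elements_if_card_ge_2:
  assumes "finite S" "card S \<ge> 2"
  obtains a b where "a \<in> S" "b \<in> S" "a \<noteq> b"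
proof -
  have "\<not> card S \<le> Suc 0"
    using assms(2) by simp
  then show ?thesis
    using card_le_Suc0_iff_eq[OF assms(1)] that by blast
qed

lemma medoid_silhouette_medoid:
  assumes "finite S" "x \<in> S" "d x x = 0" "\<And>y. y \<in> S \<Longrightarrow> 0 \<le> d x y"
  shows "medoid_silhouette d S x = 1"
proof -
  have "dist1 d S x = 0"
    using dist1_le[OF assms(1,2), of d x] dist1_ge[of S 0 d x] assms by (intro antisym) auto
  then show ?thesis
    unfolding medoid_silhouette_def by simp
qed

lemma medoid_silhouette_le_bounds:
  assumes "finite S" "a \<in> S" "b \<in> S" "a \<noteq> b" "0 < lo"
    and bounds: "\<And>y. y \<in> S \<Longrightarrow> lo \<le> d x y \<and> d x y \<le> hi"
  shows "medoid_silhouette d S x \<le> 1 - lo / hi"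
proof -
  have d1: "lo \<le> dist1 d S x"
    using assms by (intro dist1_ge) auto
  have d2_lo: "lo \<le> dist2 d S x"
    using assms by (intro dist2_ge[OF assms(1-4)]) (auto simp: le_max_iff_disj)
  have d2_hi: "dist2 d S x \<le> hi"
    using bounds[OF assms(2)] bounds[OF assms(3)] by (intro dist2_le[OF assms(1-4)]) auto
  have "lo / hi \<le> dist1 d S x / dist2 d S x"
    using d1 d2_lo d2_hi \<open>0 < lo\<close> by (intro frac_le) auto
  then show ?thesis
    using d1 \<open>0 < lo\<close> unfolding medoid_silhouette_def by auto
qed

lemma sum_if_mem:
  assumes "finite X" "S \<subseteq> X"
  shows "(\<Sum>x\<in>X. if x \<in> S then a else b) = of_nat (card S) * a + of_nat (card (X - S)) * b"
proof -
  have "X \<inter> {x. x \<in> S} = S" "X \<inter> - {x. x \<in> S} = X - S"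
    using assms(2) by auto
  then show ?thesis
    using sum.If_cases[OF assms(1), of "\<lambda>x. x \<in> S" "\<lambda>_. a" "\<lambda>_. b"] by simp
qed

definition hub_dissimilarity :: "'a set \<Rightarrow> 'a \<Rightarrow> 'a \<Rightarrow> 'a \<Rightarrow> real" where
  "hub_dissimilarity M c x y =
     (if x = y then 0
      else if x = c \<or> y = c then (if x \<in> M \<and> y \<in> M then 2 else 1)
      else 3)"

lemma dissimilarity_hub: "dissimilarity X (hub_dissimilarity M c)"
  unfolding dissimilarity_def hub_dissimilarity_def by auto

lemma medoid_silhouette_hub_le:
  assumes "finite S" "card S \<ge> 2"
  shows "medoid_silhouette (hub_dissimilarity M c) S x \<le> (if x \<in> S then 1 else 2/3)"
proof (cases "x \<in> S")
  case True
  then show ?thesis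
    using medoid_silhouette_medoid[OF assms(1) True] by (simp add: hub_dissimilarity_def)
next
  case False
  obtain a b where ab: "a \<in> S" "b \<in> S" "a \<noteq> b"
    using two_elements_if_card_ge_2[OF assms] .
  with False have "medoid_silhouette (hub_dissimilarity M c) S x \<le> 1 - 1 / 3"
    by (intro medoid_silhouette_le_bounds[OF assms(1) ab]) (auto simp: hub_dissimilarity_def)
  then show ?thesis
    using False by simp
qed

lemma medoid_silhouette_hub_medoids:
  assumes "finite M" "c \<in> M" "card M \<ge> 2"
  shows "medoid_silhouette (hub_dissimilarity M c) M x = (if x \<in> M then 1 else 2/3)"
proof (cases "x \<in> M")
  case True
  then show ?thesis
    using medoid_silhouette_medoid[OF assms(1) True] by (simp add: hub_dissimilarity_def)
next
  case False
  let ?d = "hub_dissimilarity M c"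
  obtain a b where ab: "a \<in> M" "b \<in> M" "a \<noteq> b"
    using two_elements_if_card_ge_2[OF assms(1,3)] .
  have "dist1 ?d M x = 1"
  proof (rule antisym)
    have "x \<noteq> c"
      using False assms(2) by blast
    then show "dist1 ?d M x \<le> 1"
      using dist1_le[OF assms(1,2), of ?d x] False by (simp add: hub_dissimilarity_def)
    show "1 \<le> dist1 ?d M x"
      using ab False by (intro dist1_ge[OF assms(1)]) (auto simp: hub_dissimilarity_def)
  qed
  moreover have "dist2 ?d M x = 3"
  proof (rule antisym)
    show "dist2 ?d M x \<le> 3"
      by (intro dist2_le[OF assms(1) ab]) (auto simp: hub_dissimilarity_def)
    show "3 \<le> dist2 ?d M x"
      using False assms(2) by (intro dist2_ge[OF assms(1) ab]) (auto simp: hub_dissimilarity_def)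
  qed
  ultimately show ?thesis
    using False unfolding medoid_silhouette_def by simp
qed

lemma medoid_silhouette_hub_less:
  assumes "finite S" "finite M" "c \<in> M" "card S = card M" "card M \<ge> 2" "S \<noteq> M"
  shows "\<exists>x\<in>M - S. medoid_silhouette (hub_dissimilarity M c) S x < 2/3"
proof -
  obtain a b where ab: "a \<in> S" "b \<in> S" "a \<noteq> b"
    using two_elements_if_card_ge_2[OF assms(1) assms(5)[folded assms(4)]] .
  show ?thesis
  proof (cases "c \<in> S")
    case False
    then have "medoid_silhouette (hub_dissimilarity M c) S c \<le> 1 - 1 / 2"
      by (intro medoid_silhouette_le_bounds[OF assms(1) ab]) (auto simp: hub_dissimilarity_def)
    then show ?thesis
      using False assms(3) by force
  next
    case True
    have "\<not> M \<subseteq> S"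
      using card_subset_eq[OF assms(1), of M] assms(4,6) by auto
    then obtain m where m: "m \<in> M" "m \<notin> S"
      by blast
    then have "medoid_silhouette (hub_dissimilarity M c) S m \<le> 1 - 2 / 3"
      using True assms(3) by (intro medoid_silhouette_le_bounds[OF assms(1) ab]) (auto simp: hub_dissimilarity_def)
    then show ?thesis
      using m by force
  qed
qed

lemma avg_medoid_silhouette_hub:
  assumes "finite X" "M \<subseteq> X" "c \<in> M" "card M \<ge> 2" "S \<subseteq> X" "card S = card M"
  defines "d \<equiv> hub_dissimilarity M c"
  shows avg_medoid_silhouette_hub_le: "avg_medoid_silhouette X d S \<le> avg_medoid_silhouette X d M"
    and avg_medoid_silhouette_hub_less:
      "S \<noteq> M \<Longrightarrow> avg_medoid_silhouette X d S < avg_medoid_silhouette X d M"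
proof -
  define bound where "bound T = (\<Sum>x\<in>X. if x \<in> T then 1 else 2/3 :: real)" for T
  have finite: "finite S" "finite M"
    using assms(1,2,5) finite_subset by auto
  have "card (X - S) = card (X - M)"
    using assms(6) card_Diff_subset[OF finite(1) assms(5)] card_Diff_subset[OF finite(2) assms(2)]
    by simp
  then have "bound S = bound M"
    unfolding bound_def by (simp add: sum_if_mem[OF assms(1,2)] sum_if_mem[OF assms(1,5)] assms(6))
  also have "bound M = (\<Sum>x\<in>X. medoid_silhouette d M x)"
    unfolding bound_def d_def using medoid_silhouette_hub_medoids[OF finite(2) assms(3,4)] by simp
  finally have bound_eq: "bound S = (\<Sum>x\<in>X. medoid_silhouette d M x)" .
  have pointwise: "\<forall>x\<in>X. medoid_silhouette d S x \<le> (if x \<in> S then 1 else 2/3)"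
    unfolding d_def using medoid_silhouette_hub_le[OF finite(1)] assms(4,6) by simp
  have "card X > 0"
    using assms(1-3) card_gt_0_iff by blast
  then have avg_mono: "avg_medoid_silhouette X d S \<le> avg_medoid_silhouette X d M \<longleftrightarrow>
      (\<Sum>x\<in>X. medoid_silhouette d S x) \<le> (\<Sum>x\<in>X. medoid_silhouette d M x)"
    "avg_medoid_silhouette X d S < avg_medoid_silhouette X d M \<longleftrightarrow>
      (\<Sum>x\<in>X. medoid_silhouette d S x) < (\<Sum>x\<in>X. medoid_silhouette d M x)"
    unfolding avg_medoid_silhouette_def by (simp_all add: divide_le_cancel divide_less_cancel)
  show "avg_medoid_silhouette X d S \<le> avg_medoid_silhouette X d M"
    unfolding avg_mono bound_eq[symmetric] bound_def using pointwise by (simp add: sum_mono)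
  assume "S \<noteq> M"
  then obtain y where "y \<in> M - S" "medoid_silhouette d S y < 2/3"
    unfolding d_def using medoid_silhouette_hub_less[OF finite assms(3,6,4)] by blast
  then have "\<exists>x\<in>X. medoid_silhouette d S x < (if x \<in> S then 1 else 2/3)"
    using assms(2) by auto
  then show "avg_medoid_silhouette X d S < avg_medoid_silhouette X d M"
    unfolding avg_mono bound_eq[symmetric] bound_def by (rule sum_strict_mono_ex1[OF assms(1) pointwise])
qed

lemma maximizers_eq_singleton:
  fixes f :: "'a \<Rightarrow> 'b::linorder"
  assumes "P m" "\<And>x. P x \<Longrightarrow> f x \<le> f m" "\<And>x. P x \<Longrightarrow> x \<noteq> m \<Longrightarrow> f x < f m"
  shows "{x. P x \<and> (\<forall>y. P y \<longrightarrow> f y \<le> f x)} = {m}"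
  using assms by (force simp: not_less[symmetric])

theorem theorem3:
  fixes X M :: "'a set" and k :: nat
  assumes "finite X" and "k \<ge> 2" and "M \<subseteq> X" and "card M = k"
  shows "\<exists>d. dissimilarity X d \<and>
           {M'. M' \<subseteq> X \<and> card M' = k \<and>
                (\<forall>M''. M'' \<subseteq> X \<and> card M'' = k \<longrightarrow>
                   avg_medoid_silhouette X d M'' \<le> avg_medoid_silhouette X d M')} = {M}"
proof -
  obtain c where c: "c \<in> M"
    using assms(2,4) by fastforce
  have card_M: "card M \<ge> 2"
    using assms(2,4) by simp
  let ?avg = "avg_medoid_silhouette X (hub_dissimilarity M c)"
  have "{S. (S \<subseteq> X \<and> card S = k) \<and>
          (\<forall>T. T \<subseteq> X \<and> card T = k \<longrightarrow> ?avg T \<le> ?avg S)} = {M}"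
    using assms(3,4) avg_medoid_silhouette_hub_le[OF assms(1,3) c card_M]
      avg_medoid_silhouette_hub_less[OF assms(1,3) c card_M]
    by (intro maximizers_eq_singleton) auto
  with dissimilarity_hub show ?thesis
    unfolding conj_assoc by (intro exI[of _ "hub_dissimilarity M c"] conjI)
qed

end
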